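(* Let $a\ge 0$ and, for $x_i\in\mathbb{R}$, let $P_\pm^a(x_i)$ be the smallest $x>x_i$ at which the solution $Y_\pm$ of $y'=-ay-\sin(\pi\omega_\pm x)$, $Y_\pm(x_i)=0$, vanishes, where $\omega_+=3/2$, $\omega_-=1/2$. Let $P(x,a)=P_+^a(P_-^a(x))$, $I_-=(0,\tfrac23)$ and $\Delta(x,a)=P(x,a)-(x+4)$. Then there exists $a_l>0$ (small) such that the roots of $\Delta(x,a)=0$ define a function $x=x(a)$ for all $a\in(0,a_l)$, which satisfies $x(0)=x_0$, where $x_0\in I_-$ is a solution of $$\frac{32}{9\pi}+\frac{2x_0}{3}\cot\frac{3\pi x_0}{2}+(4-2x_0)\cot\frac{\pi x_0}{2}=0.$$
   Context: For $a=0$ the maps are $P_\pm^0(x_i)=\frac{2}{\omega_\pm}\left(1+\lfloor\omega_\pm x_i\rfloor\right)-x_i$, so that $P(x,0)=x+4$ for $x\in I_-$. The map $P(\cdot,a)$ is the return map of the piecewise system $\dot y=-ay-\sin(\pi\omega x)$ with $\omega=3/2$ for $y>0$ and $\omega=1/2$ for $y<0$, for an orbit leaving $y=0$ into $y<0$ at $x$, returning to $y=0$, then traversing $y>0$ and returning to $y=0$. *)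

theory Defs
  imports "HOL-Analysis.Analysis"
begin

text \<open>The solution Y of y' = -a y - sin(pi w x) with Y(xi) = 0 (unique, linear ODE).\<close>
definition ode_sol :: "real \<Rightarrow> real \<Rightarrow> real \<Rightarrow> real \<Rightarrow> real" where
  "ode_sol w a xi = (THE Y. Y xi = 0 \<and>
      (\<forall>x. (Y has_real_derivative (- a * Y x - sin (pi * w * x))) (at x)))"

definition first_zero :: "real \<Rightarrow> real \<Rightarrow> real \<Rightarrow> real" where
  "first_zero w a xi = (LEAST x. x > xi \<and> ode_sol w a xi x = 0)"

definition P_plus :: "real \<Rightarrow> real \<Rightarrow> real" where
  "P_plus a xi = first_zero (3/2) a xi"

definition P_minus :: "real \<Rightarrow> real \<Rightarrow> real" where
  "P_minus a xi = first_zero (1/2) a xi"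

definition Pmap :: "real \<Rightarrow> real \<Rightarrow> real" where
  "Pmap x a = P_plus a (P_minus a x)"

definition I_minus :: "real set" where
  "I_minus = {0<..<2/3}"

definition Delta :: "real \<Rightarrow> real \<Rightarrow> real" where
  "Delta x a = Pmap x a - (x + 4)"

end

theory Submission
  imports Defs
begin

(*
  The equation is linear: with H = ode_level w a, the solution vanishing at xi is
  exp (-a x) (H x - H xi) / (a^2 + (pi w)^2), and H' = -(a^2 + (pi w)^2) exp (a t) sin (pi w t).
  So P_minus and P_plus are first returns of H to its initial level, located by the
  monotonicity of H on half-periods. For x in [1/2, 13/20] and small a, the equation
  Delta x a = 0 becomes the level equation Delta_level x a = 0, which involves P_minus only.

  For a = 0 both half-returns are reflections and P(x, 0) = x + 4. Differentiating the
  level equations in a at a = 0 gives P_minus a x = 4 - x + a e1(x) + o(a), and the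
  (3/2)-level at 4 - x + a e matches the one at x + 4 to first order exactly for e = e2(x)
  (e1 = minus_shift_rate, e2 = plus_shift_rate). Moreover e2 - e1 = (2/pi) F, where
  F = Delta_rate is the left-hand side of the equation for x0. Hence for small a > 0 the
  sign of Delta_level x a is that of F x. F decreases from positive to negative on
  [1/2, 13/20], so it has a single zero x0 there; comparing the two level equations at two
  zeros of Delta_level (., a) shows that it has at most one zero, which exists by the
  intermediate value theorem. This zero depends continuously on a and tends to x0, because
  it is characterised by sign conditions that persist under perturbation.
*)

section \<open>Sign persistence and continuous roots\<close>

lemma uniformly_pos_near_0:
  fixes D :: "real \<Rightarrow> 'a::metric_space \<Rightarrow> real"
  assumes K: "compact K" and cont: "continuous_on ({0..1} \<times> K) (\<lambda>(a, x). D a x)"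
    and pos: "\<And>x. x \<in> K \<Longrightarrow> D 0 x > 0"
  shows "\<exists>b>0. \<forall>a\<in>{0..b}. \<forall>x\<in>K. D a x > 0"
proof (cases "K = {}")
  case True
  then show ?thesis by (intro exI[of _ 1]) auto
next
  case False
  have "continuous_on K (\<lambda>x. D 0 x)"
    by (rule continuous_on_compose2[OF cont, of _ "\<lambda>x. (0, x)", simplified])
      (auto intro!: continuous_intros)
  then obtain x0 where x0: "x0 \<in> K" "\<And>y. y \<in> K \<Longrightarrow> D 0 x0 \<le> D 0 y"
    using continuous_attains_inf[OF K False] by blast
  define m where "m = D 0 x0"
  have "m > 0" using pos x0 by (simp add: m_def)
  have "uniformly_continuous_on ({0..1} \<times> K) (\<lambda>(a, x). D a x)"
    by (rule compact_uniformly_continuous[OF cont]) (simp add: K compact_Times)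
  then obtain d where d: "d > 0" "\<And>p q. p \<in> {0..1} \<times> K \<Longrightarrow> q \<in> {0..1} \<times> K \<Longrightarrow>
      dist q p < d \<Longrightarrow> dist (case q of (a, x) \<Rightarrow> D a x) (case p of (a, x) \<Rightarrow> D a x) < m"
    using \<open>m > 0\<close> unfolding uniformly_continuous_on_def by metis
  show ?thesis
  proof (intro exI[of _ "min (d/2) 1"] conjI ballI)
    fix a x assume a: "a \<in> {0..min (d/2) 1}" and x: "x \<in> K"
    have "dist (a, x) (0, x) < d" using a d by (simp add: dist_Pair_Pair dist_real_def)
    then have "dist (D a x) (D 0 x) < m" using d(2)[of "(0, x)" "(a, x)"] a x by auto
    moreover have "D 0 x \<ge> m" using x0 x by (simp add: m_def)
    ultimately show "D a x > 0" by (simp add: dist_real_def abs_less_iff)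
  qed (use d in simp)
qed

lemma eventually_uniformly_pos_by_derivative:
  fixes f D :: "real \<Rightarrow> 'a::metric_space \<Rightarrow> real"
  assumes "compact K" "continuous_on ({0..1} \<times> K) (\<lambda>(a, x). D a x)"
    and "\<And>x. x \<in> K \<Longrightarrow> D 0 x > 0"
    and deriv: "\<And>x a. x \<in> K \<Longrightarrow> ((\<lambda>a. f a x) has_real_derivative D a x) (at a)"
    and f0: "\<And>x. x \<in> K \<Longrightarrow> f 0 x = 0"
  shows "\<forall>\<^sub>F a in at_right 0. \<forall>x\<in>K. f a x > 0"
proof -
  obtain b where b: "b > 0" "\<And>a x. a \<in> {0..b} \<Longrightarrow> x \<in> K \<Longrightarrow> D a x > 0"
    using uniformly_pos_near_0[OF assms(1-3)] by blast
  have "f a x > 0" if a: "0 < a" "a < b" and x: "x \<in> K" for a x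
  proof -
    have "f 0 x < f a x"
    proof (rule DERIV_pos_imp_increasing[of 0 a "\<lambda>a. f a x"])
      fix s assume "0 \<le> s" "s \<le> a"
      then show "\<exists>y. ((\<lambda>a. f a x) has_real_derivative y) (at s) \<and> 0 < y"
        using deriv[OF x, of s] b(2)[of s x] a x by auto
    qed (use a in simp)
    then show ?thesis using f0 x by simp
  qed
  then show ?thesis using b(1) unfolding eventually_at_right_field by blast
qed

lemma eventually_uniformly_neg_by_derivative:
  fixes f D :: "real \<Rightarrow> 'a::metric_space \<Rightarrow> real"
  assumes "compact K" "continuous_on ({0..1} \<times> K) (\<lambda>(a, x). D a x)"
    and "\<And>x. x \<in> K \<Longrightarrow> D 0 x < 0"
    and "\<And>x a. x \<in> K \<Longrightarrow> ((\<lambda>a. f a x) has_real_derivative D a x) (at a)"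
    and "\<And>x. x \<in> K \<Longrightarrow> f 0 x = 0"
  shows "\<forall>\<^sub>F a in at_right 0. \<forall>x\<in>K. f a x < 0"
proof -
  have "continuous_on ({0..1} \<times> K) (\<lambda>(a, x). - D a x)"
    using continuous_on_minus[OF assms(2)] by (simp add: case_prod_beta)
  then have "\<forall>\<^sub>F a in at_right 0. \<forall>x\<in>K. - f a x > 0"
    using assms(1,3-)
    by (intro eventually_uniformly_pos_by_derivative[of K "\<lambda>a x. - D a x" "\<lambda>a x. - f a x"])
      (auto intro: DERIV_minus)
  then show ?thesis by simp
qed

lemma eventually_abs_mult_less:
  fixes e c :: real
  assumes "c > 0"
  shows "\<forall>\<^sub>F a in at_right 0. \<bar>a * e\<bar> < c"
proof -
  have "((\<lambda>a. \<bar>a * e\<bar>) \<longlongrightarrow> 0) (at_right 0)"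
    by (intro tendsto_eq_intros) auto
  then show ?thesis using assms by (rule order_tendstoD(2))
qed

lemma continuous_on_sign_change_point:
  fixes F :: "'a::topological_space \<Rightarrow> real \<Rightarrow> real" and g :: "'a \<Rightarrow> real"
  assumes range: "\<And>p. p \<in> S \<Longrightarrow> g p \<in> {l..r}"
    and before: "\<And>p t. p \<in> S \<Longrightarrow> t \<in> {l..r} \<Longrightarrow> t < g p \<Longrightarrow> F p t > 0"
    and after: "\<And>p t. p \<in> S \<Longrightarrow> t \<in> {l..r} \<Longrightarrow> g p < t \<Longrightarrow> F p t < 0"
    and at_root: "\<And>p. p \<in> S \<Longrightarrow> F p (g p) = 0"
    and persist_pos: "\<And>p t. p \<in> S \<Longrightarrow> t \<in> {l..r} \<Longrightarrow> F p t > 0 \<Longrightarrow> \<forall>\<^sub>F q in at p within S. F q t > 0"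
    and persist_neg: "\<And>p t. p \<in> S \<Longrightarrow> t \<in> {l..r} \<Longrightarrow> F p t < 0 \<Longrightarrow> \<forall>\<^sub>F q in at p within S. F q t < 0"
  shows "continuous_on S g"
  unfolding continuous_on_def
proof (intro ballI order_tendstoI)
  fix p t assume p: "p \<in> S"
  have in_S: "\<forall>\<^sub>F q in at p within S. q \<in> S" by (simp add: eventually_at_filter)
  assume "t < g p"
  show "\<forall>\<^sub>F q in at p within S. t < g q"
  proof (cases "t < l")
    case True
    show ?thesis using in_S by (rule eventually_mono) (use True range in fastforce)
  next
    case False
    then have t: "t \<in> {l..r}" using range[OF p] \<open>t < g p\<close> by auto
    show ?thesis
      using persist_pos[OF p t before[OF p t \<open>t < g p\<close>]] in_S
    proof eventually_elim
      case (elim q)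
      then show "t < g q" using after[OF elim(2) t] at_root[OF elim(2)]
        by (cases "g q < t") (auto simp: not_less le_less)
    qed
  qed
next
  fix p t assume p: "p \<in> S"
  have in_S: "\<forall>\<^sub>F q in at p within S. q \<in> S" by (simp add: eventually_at_filter)
  assume "g p < t"
  show "\<forall>\<^sub>F q in at p within S. g q < t"
  proof (cases "r < t")
    case True
    show ?thesis using in_S by (rule eventually_mono) (use True range in fastforce)
  next
    case False
    then have t: "t \<in> {l..r}" using range[OF p] \<open>g p < t\<close> by auto
    show ?thesis
      using persist_neg[OF p t after[OF p t \<open>g p < t\<close>]] in_S
    proof eventually_elim
      case (elim q)
      then show "g q < t" using before[OF elim(2) t] at_root[OF elim(2)]
        by (cases "t < g q") (auto simp: not_less le_less)
    qed
  qed
qed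

lemma unique_zero_sign_change:
  fixes f :: "real \<Rightarrow> real"
  assumes "l \<le> r" and cont: "continuous_on {l..r} f" and "f l > 0" "f r < 0"
    and unique: "\<And>x y. x \<in> {l..r} \<Longrightarrow> y \<in> {l..r} \<Longrightarrow> f x = 0 \<Longrightarrow> f y = 0 \<Longrightarrow> x = y"
  obtains z where "z \<in> {l<..<r}" "f z = 0"
    "\<And>t. t \<in> {l..r} \<Longrightarrow> t < z \<Longrightarrow> f t > 0" "\<And>t. t \<in> {l..r} \<Longrightarrow> z < t \<Longrightarrow> f t < 0"
proof -
  obtain z where z: "z \<in> {l..r}" "f z = 0"
    using IVT2'[of f r 0 l] assms by auto
  have "f t > 0" if t: "t \<in> {l..r}" "t < z" for t
  proof (rule ccontr)
    assume "\<not> f t > 0"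
    then obtain y where "l \<le> y" "y \<le> t" "f y = 0"
      using IVT2'[of f t 0 l] continuous_on_subset[OF cont] assms(3) t by fastforce
    then show False using unique[of y z] z t by auto
  qed
  moreover have "f t < 0" if t: "t \<in> {l..r}" "z < t" for t
  proof (rule ccontr)
    assume "\<not> f t < 0"
    then obtain y where "t \<le> y" "y \<le> r" "f y = 0"
      using IVT2'[of f r 0 t] continuous_on_subset[OF cont] assms(4) t by fastforce
    then show False using unique[of y z] z t by auto
  qed
  moreover have "z \<noteq> l" "z \<noteq> r" using z assms(3,4) by auto
  ultimately show thesis using that[of z] z by auto
qed

lemma eventually_at_0_within_Ico:
  "\<forall>\<^sub>F a in at_right 0. P a \<Longrightarrow> \<forall>\<^sub>F a in at (0::real) within {0..<A}. P a \<and> a \<noteq> 0"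
  unfolding eventually_at_filter by (erule eventually_mono) auto

lemma eventually_at_pos_within:
  assumes "(p::real) > 0" "\<forall>\<^sub>F a in at p. P a"
  shows "\<forall>\<^sub>F a in at p within S. P a \<and> a \<noteq> 0"
proof -
  have "\<forall>\<^sub>F a in at p. 0 < a" using order_tendstoD(1)[OF tendsto_ident_at \<open>p > 0\<close>] .
  with assms(2) have "\<forall>\<^sub>F a in at p. P a \<and> a \<noteq> 0" by eventually_elim auto
  then show ?thesis by (rule filter_leD[OF at_le[OF subset_UNIV]])
qed

lemma continuous_on_branch_from_limit:
  fixes Phi :: "real \<Rightarrow> real \<Rightarrow> real" and g :: "real \<Rightarrow> real"
  assumes g: "\<And>a. a \<in> {0<..<A} \<Longrightarrow> g a \<in> {l..r} \<and> Phi (g a) a = 0 \<and>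
      (\<forall>t\<in>{l..r}. t < g a \<longrightarrow> Phi t a > 0) \<and> (\<forall>t\<in>{l..r}. g a < t \<longrightarrow> Phi t a < 0)"
    and cont_a: "\<And>x a. x \<in> {l..r} \<Longrightarrow> a \<in> {0<..<A} \<Longrightarrow> isCont (Phi x) a"
    and x0: "x0 \<in> {l..r}"
    and before_x0: "\<And>x. x \<in> {l..<x0} \<Longrightarrow> \<forall>\<^sub>F a in at_right 0. Phi x a > 0"
    and after_x0: "\<And>x. x \<in> {x0<..r} \<Longrightarrow> \<forall>\<^sub>F a in at_right 0. Phi x a < 0"
  shows "continuous_on {0..<A} (\<lambda>a. if a = 0 then x0 else g a)"
proof -
  \<comment> \<open>At \<open>a = 0\<close> the sign pattern of \<open>x0 - t\<close> stands in for \<open>Phi\<close>;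
    \<open>before_x0\<close> and \<open>after_x0\<close> make it persist to small \<open>a > 0\<close>.\<close>
  define F where "F a t = (if a = 0 then x0 - t else Phi t a)" for a t
  have F_persists: "\<forall>\<^sub>F q in at p within {0..<A}. c * F q t > 0"
    if p: "p \<in> {0..<A}" and t: "t \<in> {l..r}" and c: "c = 1 \<or> c = -1" and pos: "c * F p t > 0"
    for p t c
  proof (cases "p = 0")
    case True
    have "\<forall>\<^sub>F q in at_right 0. c * Phi t q > 0"
      using c pos t before_x0[of t] after_x0[of t] True by (auto simp: F_def)
    from eventually_at_0_within_Ico[OF this] show ?thesis
      unfolding True by eventually_elim (simp add: F_def)
  next
    case False
    then have "c * Phi t p > 0" "isCont (\<lambda>q. c * Phi t q) p"
      using pos p t cont_a[of t p] by (auto simp: F_def)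
    then have "\<forall>\<^sub>F q in at p. c * Phi t q > 0"
      unfolding isCont_def by (rule order_tendstoD(1)[rotated])
    moreover have "p > 0" using False p by simp
    ultimately have "\<forall>\<^sub>F q in at p within {0..<A}. c * Phi t q > 0 \<and> q \<noteq> 0"
      using eventually_at_pos_within by blast
    then show ?thesis by eventually_elim (simp add: F_def)
  qed
  show ?thesis
  proof (rule continuous_on_sign_change_point[where l = l and r = r and F = F])
    show "\<forall>\<^sub>F q in at p within {0..<A}. F q t > 0"
      if "p \<in> {0..<A}" "t \<in> {l..r}" "F p t > 0" for p t
      using F_persists[of p t 1] that by simp
    show "\<forall>\<^sub>F q in at p within {0..<A}. F q t < 0"
      if "p \<in> {0..<A}" "t \<in> {l..r}" "F p t < 0" for p t
      using F_persists[of p t "-1"] that by simp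
  qed (use g x0 in \<open>auto simp: F_def\<close>)
qed

lemma continuous_zero_branch:
  fixes Phi :: "real \<Rightarrow> real \<Rightarrow> real"
  assumes cont_x: "\<And>a. a \<in> {0<..<A} \<Longrightarrow> continuous_on {l..r} (\<lambda>x. Phi x a)"
    and cont_a: "\<And>x a. x \<in> {l..r} \<Longrightarrow> a \<in> {0<..<A} \<Longrightarrow> isCont (Phi x) a"
    and left: "\<And>a. a \<in> {0<..<A} \<Longrightarrow> Phi l a > 0"
    and right: "\<And>a. a \<in> {0<..<A} \<Longrightarrow> Phi r a < 0"
    and unique: "\<And>a x y. a \<in> {0<..<A} \<Longrightarrow> x \<in> {l..r} \<Longrightarrow> y \<in> {l..r} \<Longrightarrow>
      Phi x a = 0 \<Longrightarrow> Phi y a = 0 \<Longrightarrow> x = y"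
    and x0: "x0 \<in> {l..r}"
    and before_x0: "\<And>x. x \<in> {l..<x0} \<Longrightarrow> \<forall>\<^sub>F a in at_right 0. Phi x a > 0"
    and after_x0: "\<And>x. x \<in> {x0<..r} \<Longrightarrow> \<forall>\<^sub>F a in at_right 0. Phi x a < 0"
  obtains xf where "xf 0 = x0" "continuous_on {0..<A} xf"
    "\<And>a. a \<in> {0<..<A} \<Longrightarrow> xf a \<in> {l<..<r} \<and> Phi (xf a) a = 0"
proof -
  define g where "g a = (THE x. x \<in> {l..r} \<and> Phi x a = 0)" for a
  have g: "g a \<in> {l<..<r} \<and> Phi (g a) a = 0 \<and>
      (\<forall>t\<in>{l..r}. t < g a \<longrightarrow> Phi t a > 0) \<and> (\<forall>t\<in>{l..r}. g a < t \<longrightarrow> Phi t a < 0)"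
    if a: "a \<in> {0<..<A}" for a
  proof -
    obtain z where z: "z \<in> {l<..<r}" "Phi z a = 0"
        "\<And>t. t \<in> {l..r} \<Longrightarrow> t < z \<Longrightarrow> Phi t a > 0" "\<And>t. t \<in> {l..r} \<Longrightarrow> z < t \<Longrightarrow> Phi t a < 0"
      by (rule unique_zero_sign_change[OF _ cont_x[OF a] left[OF a] right[OF a] unique[OF a]])
        (use x0 in auto)
    have "g a = z"
      unfolding g_def using z unique[OF a, of _ z] by (auto intro!: the_equality)
    then show ?thesis using z by auto
  qed
  have "continuous_on {0..<A} (\<lambda>a. if a = 0 then x0 else g a)"
    using g by (intro continuous_on_branch_from_limit[OF _ cont_a x0 before_x0 after_x0]) fastforce
  then show thesis using that[of "\<lambda>a. if a = 0 then x0 else g a"] g by auto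
qed

lemma first_return_point:
  fixes f :: "real \<Rightarrow> real"
  assumes "xi < m" "m < r" "continuous_on {m..r} f"
    and "strict_antimono_on {xi..m} f" "strict_mono_on {m..r} f" "f xi < f r"
  obtains z where "m < z" "z < r" "f z = f xi" "\<And>t. xi < t \<Longrightarrow> t < z \<Longrightarrow> f t \<noteq> f xi"
proof -
  have "f m < f xi" using monotone_onD[OF assms(4)] assms(1) by auto
  then obtain z where z: "m \<le> z" "z \<le> r" "f z = f xi"
    using IVT'[of f m "f xi" r] assms by auto
  have "z \<noteq> m" "z \<noteq> r" using z \<open>f m < f xi\<close> \<open>f xi < f r\<close> by auto
  moreover have "f t \<noteq> f xi" if "xi < t" "t < z" for t
  proof (cases "t \<le> m")
    case True
    then show ?thesis using monotone_onD[OF assms(4), of xi t] that by auto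
  next
    case False
    then show ?thesis using strict_mono_onD[OF assms(5), of t z] that z by auto
  qed
  ultimately show thesis using that[of z] z by auto
qed

lemma abs_exp_cos_less:
  fixes a t T :: real
  assumes "0 \<le> a" "t \<le> T" "sin u \<noteq> 0"
  shows "\<bar>exp (a*t) * cos u\<bar> < exp (a*T)"
proof -
  have "0 < (sin u)^2" using assms(3) by simp
  then have "(cos u)^2 < 1" using sin_cos_squared_add[of u] by linarith
  then have "\<bar>cos u\<bar> < 1" by (simp add: abs_square_less_1)
  then have "\<bar>exp (a*t) * cos u\<bar> < exp (a*t)" by (simp add: abs_mult)
  also have "\<dots> \<le> exp (a*T)" using assms by (simp add: mult_left_mono)
  finally show ?thesis .
qed

lemma sin_ge_half_self:
  fixes t :: real
  assumes t: "0 \<le> t" "t \<le> 1"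
  shows "t/2 \<le> sin t"
proof -
  have "(\<lambda>t. sin t - t/2) 0 \<le> (\<lambda>t. sin t - t/2) t"
  proof (rule DERIV_nonneg_imp_nondecreasing[OF t(1)])
    fix s assume s: "0 \<le> s" "s \<le> t"
    have "cos (pi/3) \<le> cos s" using s t pi_gt3 by (intro cos_monotone_0_pi_le) auto
    then show "\<exists>y. ((\<lambda>t. sin t - t/2) has_real_derivative y) (at s) \<and> 0 \<le> y"
      by (intro exI[of _ "cos s - 1/2"]) (auto intro!: derivative_eq_intros simp: cos_60)
  qed
  then show ?thesis by simp
qed

lemma pi_sq_bounds: "9.8696 \<le> pi^2" "pi^2 \<le> 9.8697"
proof -
  have p: "3.1415926 \<le> pi" "pi \<le> 3.1415927" using pi_approx by auto
  have "3.1415926 * 3.1415926 \<le> pi * pi" by (rule mult_mono) (use p in auto)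
  then show "9.8696 \<le> pi^2" by (simp add: power2_eq_square)
  have "pi * pi \<le> 3.1415927 * 3.1415927" by (rule mult_mono) (use p in auto)
  then show "pi^2 \<le> 9.8697" by (simp add: power2_eq_square)
qed

lemma trig_bounds_in_range:
  assumes "x \<in> {1/2..13/20}"
  shows "1/2 \<le> cos (pi*x/2)" "cos (pi*x/2) \<le> sqrt 2 / 2"
    "sqrt 2 / 2 \<le> sin (pi*x/2)" "cos (3*pi*x/2) \<le> -1/2" "sin (3*pi*x/2) > 0" "sin (pi*x/2) > 0"
proof -
  have x: "pi/4 \<le> pi*x/2" "pi*x/2 \<le> pi/3" using assms by (auto simp: field_simps)
  show "1/2 \<le> cos (pi*x/2)" using cos_monotone_0_pi_le[of "pi*x/2" "pi/3"] x cos_60 by simp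
  show "cos (pi*x/2) \<le> sqrt 2 / 2" using cos_monotone_0_pi_le[of "pi/4" "pi*x/2"] x cos_45 by simp
  show "sqrt 2 / 2 \<le> sin (pi*x/2)" using sin_monotone_2pi_le[of "pi/4" "pi*x/2"] x sin_45 by simp
  have y: "3*pi/4 \<le> 3*pi*x/2" "3*pi*x/2 \<le> 39*pi/40" using assms by (auto simp: field_simps)
  have "cos (2*pi/3) = -1/2" using cos_pi_minus[of "pi/3"] cos_60 by (simp add: diff_divide_eq_iff)
  then show "cos (3*pi*x/2) \<le> -1/2" using cos_monotone_0_pi_le[of "2*pi/3" "3*pi*x/2"] y by simp
  show "sin (3*pi*x/2) > 0" using y by (intro sin_gt_zero) auto
  show "sin (pi*x/2) > 0" using x by (intro sin_gt_zero) auto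
qed

section \<open>The level function\<close>

definition ode_level :: "real \<Rightarrow> real \<Rightarrow> real \<Rightarrow> real" where
  "ode_level w a t = exp (a*t) * (pi*w*cos (pi*w*t) - a * sin (pi*w*t))"

lemma ode_level_has_real_derivative:
  "(ode_level w a has_real_derivative - (a^2 + (pi*w)^2) * exp (a*t) * sin (pi*w*t)) (at t)"
  unfolding ode_level_def
  by (auto intro!: derivative_eq_intros simp: algebra_simps power2_eq_square)

lemma continuous_on_ode_level [continuous_intros]:
  fixes S :: "'a::t2_space set"
  shows "continuous_on S f \<Longrightarrow> continuous_on S g \<Longrightarrow> continuous_on S (\<lambda>p. ode_level w (f p) (g p))"
  unfolding ode_level_def by (intro continuous_intros)

lemma continuous_on_ode_level_in_t [continuous_intros]:
  "continuous_on S (ode_level w a)"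
  using continuous_on_ode_level[OF continuous_on_const continuous_on_id] by simp

lemma linear_ode_unique:
  fixes Y Z g :: "real \<Rightarrow> real"
  assumes "\<And>x. (Y has_real_derivative - a * Y x - g x) (at x)"
    and "\<And>x. (Z has_real_derivative - a * Z x - g x) (at x)" and "Y s = Z s"
  shows "Y = Z"
proof -
  define W where "W x = exp (a*x) * (Y x - Z x)" for x
  have "(W has_real_derivative 0) (at x)" for x
  proof -
    have "(W has_real_derivative a * exp (a*x) * (Y x - Z x)
        + exp (a*x) * ((- a * Y x - g x) - (- a * Z x - g x))) (at x)"
      unfolding W_def using assms(1,2) by (auto intro!: derivative_eq_intros)
    then show ?thesis by (simp add: algebra_simps)
  qed
  then have "W x = W s" for x by (metis DERIV_isconst_all)
  then show ?thesis using assms(3) by (auto simp: W_def fun_eq_iff)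
qed

lemma ode_sol_explicit:
  assumes "w > 0"
  shows "ode_sol w a xi =
    (\<lambda>x. exp (-a*x) * (ode_level w a x - ode_level w a xi) / (a^2 + (pi*w)^2))"
proof -
  define c where "c = a^2 + (pi*w)^2"
  define Y0 where "Y0 x = exp (-a*x) * (ode_level w a x - ode_level w a xi) / c" for x
  have "c > 0" using assms by (simp add: c_def add_nonneg_pos)
  have Y0_deriv: "(Y0 has_real_derivative - a * Y0 x - sin (pi*w*x)) (at x)" for x
  proof -
    have "(Y0 has_real_derivative (-a * exp (-a*x) * (ode_level w a x - ode_level w a xi)
        + exp (-a*x) * (-c * exp (a*x) * sin (pi*w*x))) / c) (at x)"
      unfolding Y0_def c_def
      using \<open>c > 0\<close> by (auto intro!: derivative_eq_intros ode_level_has_real_derivative simp: c_def)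
    then show ?thesis
    proof (rule DERIV_cong)
      have "exp (-a*x) * (-c * exp (a*x) * sin (pi*w*x)) = -c * sin (pi*w*x)"
        by (simp add: exp_minus field_simps)
      then show "(-a * exp (-a*x) * (ode_level w a x - ode_level w a xi)
          + exp (-a*x) * (-c * exp (a*x) * sin (pi*w*x))) / c = - a * Y0 x - sin (pi*w*x)"
        using \<open>c > 0\<close> unfolding Y0_def by (simp add: field_simps)
    qed
  qed
  have "ode_sol w a xi = Y0"
    unfolding ode_sol_def
  proof (rule the_equality)
    show "Y0 xi = 0 \<and> (\<forall>x. (Y0 has_real_derivative - a * Y0 x - sin (pi*w*x)) (at x))"
      using Y0_deriv by (simp add: Y0_def)
    show "Y = Y0" if "Y xi = 0 \<and> (\<forall>x. (Y has_real_derivative - a * Y x - sin (pi*w*x)) (at x))" for Y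
      using that Y0_deriv by (intro linear_ode_unique[where s = xi]) (auto simp: Y0_def)
  qed
  then show ?thesis by (simp add: fun_eq_iff Y0_def c_def)
qed

lemma ode_sol_eq_0_iff:
  "w > 0 \<Longrightarrow> ode_sol w a xi x = 0 \<longleftrightarrow> ode_level w a x = ode_level w a xi"
  by (simp add: ode_sol_explicit add_nonneg_pos)

lemma first_zero_eqI:
  assumes "w > 0" "xi < z" "ode_level w a z = ode_level w a xi"
    and "\<And>t. xi < t \<Longrightarrow> t < z \<Longrightarrow> ode_level w a t \<noteq> ode_level w a xi"
  shows "first_zero w a xi = z"
  unfolding first_zero_def
  by (rule Least_equality) (use assms ode_sol_eq_0_iff in \<open>auto simp: not_less[symmetric]\<close>)

lemma
  assumes "2*w \<in> \<int>"
  shows cos_reflect_4: "cos (pi*w*(4 - s)) = cos (pi * w * s)"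
    and sin_reflect_4: "sin (pi*w*(4 - s)) = - sin (pi * w * s)"
    and cos_shift_4: "cos (pi*w*(s + 4)) = cos (pi * w * s)"
    and sin_shift_4: "sin (pi*w*(s + 4)) = sin (pi * w * s)"
proof -
  have c: "cos (2*pi*(2*w)) = 1" and s: "sin (2*pi*(2*w)) = 0"
    using cos_integer_2pi[OF assms] sin_integer_2pi[OF assms] by (simp_all only:)
  have "pi*w*(4 - s) = 2*pi*(2*w) - pi * w * s" "pi*w*(s + 4) = pi * w * s + 2*pi*(2*w)"
    by (simp_all add: algebra_simps)
  then show "cos (pi*w*(4 - s)) = cos (pi * w * s)" "sin (pi*w*(4 - s)) = - sin (pi * w * s)"
    "cos (pi*w*(s + 4)) = cos (pi * w * s)" "sin (pi*w*(s + 4)) = sin (pi * w * s)"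
    by (simp_all only: cos_diff sin_diff cos_add sin_add c s)
qed

lemma ode_level_reflect_4:
  "2*w \<in> \<int> \<Longrightarrow>
    ode_level w a (4 - s) = exp (a*(4 - s)) * (pi*w*cos (pi * w * s) + a * sin (pi * w * s))"
  by (simp add: ode_level_def cos_reflect_4 sin_reflect_4)

lemma ode_level_shift_4:
  "2*w \<in> \<int> \<Longrightarrow>
    ode_level w a (s + 4) = exp (a*(s + 4)) * (pi*w*cos (pi * w * s) - a * sin (pi * w * s))"
  by (simp add: ode_level_def cos_shift_4 sin_shift_4)

lemma twice_omega_Ints: "2 * (1/2::real) \<in> \<int>" "2 * (3/2::real) \<in> \<int>"
  by simp_all

lemma ode_level_strict_mono_on:
  assumes "w > 0" "\<And>t. l < t \<Longrightarrow> t < r \<Longrightarrow> sin (pi*w*t) < 0"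
  shows "strict_mono_on {l..r} (ode_level w a)"
proof (rule strict_mono_onI)
  fix s t assume st: "s \<in> {l..r}" "t \<in> {l..r}" "s < t"
  show "ode_level w a s < ode_level w a t"
  proof (rule DERIV_pos_imp_increasing_open[OF \<open>s < t\<close>])
    fix u assume "s < u" "u < t"
    then have "sin (pi*w*u) < 0" using st assms by auto
    moreover have "0 < (a^2 + (pi*w)^2) * exp (a*u)" using assms by (simp add: add_nonneg_pos)
    ultimately have "0 < - (a^2 + (pi*w)^2) * exp (a*u) * sin (pi*w*u)"
      using mult_pos_neg by (simp only: mult_minus_left neg_0_less_iff_less)
    then show "\<exists>y. (ode_level w a has_real_derivative y) (at u) \<and> 0 < y"
      using ode_level_has_real_derivative by blast
  qed (intro continuous_intros)
qed

lemma ode_level_strict_antimono_on: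
  assumes "w > 0" "\<And>t. l < t \<Longrightarrow> t < r \<Longrightarrow> sin (pi*w*t) > 0"
  shows "strict_antimono_on {l..r} (ode_level w a)"
proof (rule monotone_onI)
  fix s t assume st: "s \<in> {l..r}" "t \<in> {l..r}" "s < t"
  show "ode_level w a t < ode_level w a s"
  proof (rule DERIV_neg_imp_decreasing_open[OF \<open>s < t\<close>])
    fix u assume "s < u" "u < t"
    then have "sin (pi*w*u) > 0" using st assms by auto
    moreover have "0 < (a^2 + (pi*w)^2) * exp (a*u)" using assms by (simp add: add_nonneg_pos)
    ultimately have "- (a^2 + (pi*w)^2) * exp (a*u) * sin (pi*w*u) < 0"
      using mult_pos_pos by (simp only: mult_minus_left neg_less_0_iff_less)
    then show "\<exists>y. (ode_level w a has_real_derivative y) (at u) \<and> y < 0"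
      using ode_level_has_real_derivative by blast
  qed (intro continuous_intros)
qed

lemma ode_level_minus_antimono: "strict_antimono_on {0..2} (ode_level (1/2) a)"
  by (rule ode_level_strict_antimono_on) (auto intro: sin_gt_zero)

lemma ode_level_minus_mono: "strict_mono_on {2..4} (ode_level (1/2) a)"
proof (rule ode_level_strict_mono_on)
  fix t :: real assume "2 < t" "t < 4"
  then have "sin (pi*(1/2)*(4 - t)) > 0" by (intro sin_gt_zero) auto
  then show "sin (pi*(1/2)*t) < 0" using sin_reflect_4[OF twice_omega_Ints(1), of "4 - t"] by simp
qed simp

lemma ode_level_plus_mono: "strict_mono_on {10/3..4} (ode_level (3/2) a)"
proof (rule ode_level_strict_mono_on)
  fix t :: real assume "10/3 < t" "t < 4"
  then have "sin (pi*(3/2)*(4 - t)) > 0" by (intro sin_gt_zero) auto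
  then show "sin (pi*(3/2)*t) < 0" using sin_reflect_4[OF twice_omega_Ints(2), of "4 - t"] by simp
qed simp

lemma ode_level_plus_antimono: "strict_antimono_on {4..14/3} (ode_level (3/2) a)"
proof (rule ode_level_strict_antimono_on)
  fix t :: real assume "4 < t" "t < 14/3"
  then have "sin (pi*(3/2)*(t - 4)) > 0" by (intro sin_gt_zero) auto
  then show "sin (pi*(3/2)*t) > 0" using sin_shift_4[OF twice_omega_Ints(2), of "t - 4"] by simp
qed simp

section \<open>The half-return maps\<close>

lemma P_minus_return:
  assumes "0 < x" "x < 2" "0 \<le> a"
  shows "2 < P_minus a x \<and> P_minus a x < 4 \<and> ode_level (1/2) a (P_minus a x) = ode_level (1/2) a x"
proof -
  have "sin (pi*(1/2)*x) > 0" using assms by (intro sin_gt_zero) auto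
  then have "ode_level (1/2) a x \<le> pi/2 * (exp (a*x) * cos (pi*(1/2)*x))"
    using assms by (simp add: ode_level_def algebra_simps)
  also have "\<dots> < pi/2 * exp (a*4)"
    using abs_exp_cos_less[of a x 4 "pi*(1/2)*x"] \<open>sin _ > 0\<close> assms by simp
  also have "\<dots> = ode_level (1/2) a 4"
    using ode_level_shift_4[OF twice_omega_Ints(1), of a 0] by simp
  finally have less_4: "ode_level (1/2) a x < ode_level (1/2) a 4" .
  have antimono: "strict_antimono_on {x..2} (ode_level (1/2) a)"
    using ode_level_minus_antimono by (rule monotone_on_subset) (use assms in auto)
  obtain z where z: "2 < z" "z < 4" "ode_level (1/2) a z = ode_level (1/2) a x"
      "\<And>t. x < t \<Longrightarrow> t < z \<Longrightarrow> ode_level (1/2) a t \<noteq> ode_level (1/2) a x"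
    by (rule first_return_point[OF _ _ continuous_on_ode_level_in_t antimono
          ode_level_minus_mono less_4]) (use assms in auto)
  moreover have "P_minus a x = z"
    unfolding P_minus_def by (rule first_zero_eqI) (use z assms in auto)
  ultimately show ?thesis by simp
qed

lemma P_plus_return:
  assumes "10/3 < y" "y < 4" "0 \<le> a"
  shows "4 < P_plus a y \<and> P_plus a y < 14/3 \<and> ode_level (3/2) a (P_plus a y) = ode_level (3/2) a y"
proof -
  have "sin (pi*(3/2)*y) < 0"
    using sin_reflect_4[OF twice_omega_Ints(2), of "4 - y"] sin_gt_zero[of "pi*(3/2)*(4 - y)"] assms
    by auto
  then have "ode_level (3/2) a (14/3) = - 3*pi/2 * exp (a*(14/3))"
    using ode_level_shift_4[OF twice_omega_Ints(2), of a "2/3"] by simp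
  also have "\<dots> < 3*pi/2 * (exp (a*y) * cos (pi*(3/2)*y))"
  proof -
    have "- exp (a*(14/3)) < exp (a*y) * cos (pi*(3/2)*y)"
      using abs_exp_cos_less[of a y "14/3" "pi*(3/2)*y"] \<open>sin _ < 0\<close> assms
      by (simp add: abs_less_iff)
    then have "3*pi/2 * (- exp (a*(14/3))) < 3*pi/2 * (exp (a*y) * cos (pi*(3/2)*y))"
      by (rule mult_strict_left_mono) simp
    then show ?thesis by simp
  qed
  also have "\<dots> \<le> ode_level (3/2) a y"
    using \<open>sin _ < 0\<close> assms by (simp add: ode_level_def algebra_simps mult_nonneg_nonpos)
  finally have less_14_3: "- ode_level (3/2) a y < - ode_level (3/2) a (14/3)" by simp
  have antimono: "strict_antimono_on {y..4} (\<lambda>t. - ode_level (3/2) a t)"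
    using monotone_onD[OF ode_level_plus_mono] assms by (intro monotone_onI) auto
  have mono: "strict_mono_on {4..14/3} (\<lambda>t. - ode_level (3/2) a t)"
    using monotone_onD[OF ode_level_plus_antimono] by (intro monotone_onI) auto
  obtain z where z: "4 < z" "z < 14/3" "ode_level (3/2) a z = ode_level (3/2) a y"
      "\<And>t. y < t \<Longrightarrow> t < z \<Longrightarrow> ode_level (3/2) a t \<noteq> ode_level (3/2) a y"
    by (rule first_return_point[OF _ _ _ antimono mono less_14_3])
      (use assms continuous_on_minus[OF continuous_on_ode_level_in_t] in auto)
  moreover have "P_plus a y = z"
    unfolding P_plus_def by (rule first_zero_eqI) (use z assms in auto)
  ultimately show ?thesis by simp
qed

lemma Delta_eq_0_iff:
  assumes "0 \<le> x" "x \<le> 2/3" "0 \<le> a" "10/3 < P_minus a x" "P_minus a x < 4"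
  shows "Delta x a = 0 \<longleftrightarrow> ode_level (3/2) a (x + 4) = ode_level (3/2) a (P_minus a x)"
proof -
  define z where "z = Pmap x a"
  have z: "4 < z" "z < 14/3" "ode_level (3/2) a z = ode_level (3/2) a (P_minus a x)"
    using P_plus_return[OF assms(4,5,3)] by (simp_all add: z_def Pmap_def)
  have "inj_on (ode_level (3/2) a) {4..14/3}"
    using ode_level_plus_antimono strict_antimono_iff_antimono by blast
  then have "z = x + 4 \<longleftrightarrow> ode_level (3/2) a z = ode_level (3/2) a (x + 4)"
    using z assms inj_onD[of "ode_level (3/2) a" "{4..14/3}" z "x + 4"] by auto
  then show ?thesis using z by (auto simp: Delta_def z_def)
qed

lemma continuous_on_P_minus: "continuous_on ({0..} \<times> {0<..<2}) (\<lambda>(a, x). P_minus a x)"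
proof -
  define S :: "(real \<times> real) set" where "S = {0..} \<times> {0<..<2}"
  define F where "F p t = ode_level (1/2) (fst p) (snd p) - ode_level (1/2) (fst p) t" for p t
  have ret: "2 < P_minus (fst p) (snd p) \<and> P_minus (fst p) (snd p) < 4 \<and>
      ode_level (1/2) (fst p) (P_minus (fst p) (snd p)) = ode_level (1/2) (fst p) (snd p)"
    if "p \<in> S" for p
    using that P_minus_return[of "snd p" "fst p"] by (auto simp: S_def)
  have lim: "((\<lambda>q. F q t) \<longlongrightarrow> F p t) (at p within S)" if "p \<in> S" for p t
  proof -
    have "continuous_on S (\<lambda>q. F q t)" unfolding F_def by (intro continuous_intros)
    then show ?thesis using that by (simp add: continuous_on_def)
  qed
  have "continuous_on S (\<lambda>p. P_minus (fst p) (snd p))"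
  proof (rule continuous_on_sign_change_point[where l = 2 and r = 4 and F = F])
    fix p t assume p: "p \<in> S" and t: "t \<in> {2..4::real}"
    show "F p t > 0" if "t < P_minus (fst p) (snd p)"
      using that strict_mono_onD[OF ode_level_minus_mono[of "fst p"], of t "P_minus (fst p) (snd p)"]
        ret[OF p] t
      by (auto simp: F_def)
    show "F p t < 0" if "P_minus (fst p) (snd p) < t"
      using that strict_mono_onD[OF ode_level_minus_mono[of "fst p"], of "P_minus (fst p) (snd p)" t]
        ret[OF p] t
      by (auto simp: F_def)
    show "\<forall>\<^sub>F q in at p within S. F q t > 0" if "F p t > 0"
      using lim[OF p] that by (rule order_tendstoD(1))
    show "\<forall>\<^sub>F q in at p within S. F q t < 0" if "F p t < 0"
      using lim[OF p] that by (rule order_tendstoD(2))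
  qed (use ret in \<open>force simp: F_def\<close>)+
  then show ?thesis by (simp add: S_def case_prod_beta)
qed

section \<open>First order in the damping\<close>

definition level_gap :: "real \<Rightarrow> real \<Rightarrow> real \<Rightarrow> real \<Rightarrow> real \<Rightarrow> real" where
  "level_gap w e t0 t1 a = ode_level w a (t0 + a*e) - ode_level w a t1"

definition level_gap_deriv :: "real \<Rightarrow> real \<Rightarrow> real \<Rightarrow> real \<Rightarrow> real \<Rightarrow> real" where
  "level_gap_deriv w e t0 t1 a =
    exp (a*(t0 + a*e)) * ((t0 + 2*a*e) * (pi*w*cos (pi*w*(t0 + a*e)) - a * sin (pi*w*(t0 + a*e)))
      - ((pi*w)^2*e + 1) * sin (pi*w*(t0 + a*e)) - a*(pi*w)*e*cos (pi*w*(t0 + a*e)))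
    - exp (a*t1) * (t1 * (pi*w*cos (pi*w*t1) - a * sin (pi*w*t1)) - sin (pi*w*t1))"

lemma level_gap_has_real_derivative:
  "((\<lambda>a. level_gap w e t0 t1 a) has_real_derivative level_gap_deriv w e t0 t1 a) (at a)"
  unfolding level_gap_def ode_level_def level_gap_deriv_def
  by (rule DERIV_cong, (rule derivative_eq_intros refl)+) (simp add: algebra_simps power2_eq_square)

lemma continuous_on_level_gap_deriv [continuous_intros]:
  fixes S :: "'a::t2_space set"
  shows "continuous_on S f \<Longrightarrow> continuous_on S g \<Longrightarrow> continuous_on S h \<Longrightarrow>
    continuous_on S (\<lambda>p. level_gap_deriv w e (f p) (g p) (h p))"
  unfolding level_gap_deriv_def by (intro continuous_intros)

lemma level_gap_deriv_0:
  "level_gap_deriv w e t0 t1 0 = t0*(pi*w)*cos (pi*w*t0) - ((pi*w)^2*e + 1) * sin (pi*w*t0)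
    - t1*(pi*w)*cos (pi*w*t1) + sin (pi*w*t1)"
  unfolding level_gap_deriv_def by (simp add: algebra_simps)

definition minus_shift_rate :: "real \<Rightarrow> real" where
  "minus_shift_rate x =
    - ((4 - 2*x)*(pi/2)*cos (pi*x/2) + 2 * sin (pi*x/2)) / ((pi/2)^2 * sin (pi*x/2))"

definition plus_shift_rate :: "real \<Rightarrow> real" where
  "plus_shift_rate x =
    (2*x*(3*pi/2)*cos (3*pi*x/2) - 2 * sin (3*pi*x/2)) / ((3*pi/2)^2 * sin (3*pi*x/2))"

definition Delta_rate :: "real \<Rightarrow> real" where
  "Delta_rate x =
    32 / (9 * pi) + (2 * x / 3) * cot (3 * pi * x / 2) + (4 - 2 * x) * cot (pi * x / 2)"

lemma level_gap_minus_0: "level_gap (1/2) e (4 - x) x 0 = 0"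
  using cos_reflect_4[OF twice_omega_Ints(1), of x] by (simp add: level_gap_def ode_level_def)

lemma level_gap_plus_0: "level_gap (3/2) e (4 - x) (x + 4) 0 = 0"
  using cos_reflect_4[OF twice_omega_Ints(2), of x] cos_shift_4[OF twice_omega_Ints(2), of x]
  by (simp add: level_gap_def ode_level_def)

lemma level_gap_deriv_minus_0:
  assumes "sin (pi*x/2) > 0"
  shows "level_gap_deriv (1/2) e (4 - x) x 0 = (pi/2)^2 * sin (pi*x/2) * (e - minus_shift_rate x)"
  using assms
  unfolding level_gap_deriv_0 cos_reflect_4[OF twice_omega_Ints(1)]
    sin_reflect_4[OF twice_omega_Ints(1)] minus_shift_rate_def
  by (simp add: field_simps power2_eq_square)

lemma level_gap_deriv_plus_0:
  assumes "sin (3*pi*x/2) > 0"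
  shows "level_gap_deriv (3/2) e (4 - x) (x + 4) 0 =
    (3*pi/2)^2 * sin (3*pi*x/2) * (e - plus_shift_rate x)"
  using assms
  unfolding level_gap_deriv_0 cos_reflect_4[OF twice_omega_Ints(2)]
    sin_reflect_4[OF twice_omega_Ints(2)] cos_shift_4[OF twice_omega_Ints(2)]
    sin_shift_4[OF twice_omega_Ints(2)] plus_shift_rate_def
  by (simp add: field_simps power2_eq_square)

lemma plus_minus_shift_rate_diff:
  assumes "sin (pi*x/2) > 0" "sin (3*pi*x/2) > 0"
  shows "plus_shift_rate x - minus_shift_rate x = 2/pi * Delta_rate x"
  using assms unfolding minus_shift_rate_def plus_shift_rate_def Delta_rate_def cot_def
  by (simp add: field_simps power2_eq_square)

lemma minus_shift_rate_bounds:
  assumes x: "x \<in> {1/2..13/20}"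
  shows "-3 < minus_shift_rate x" "minus_shift_rate x < -3/2"
proof -
  note trig = trig_bounds_in_range[OF x]
  have "(3*pi^2/8 - 2) * sin (pi*x/2) \<le> 3*pi^2/8 - 2"
    using pi_sq_bounds by (simp add: mult_left_le)
  also have "\<dots> < (27/10)*(pi/2)*(1/2)" using pi_sq_bounds pi_approx by simp
  also have "\<dots> \<le> (4 - 2*x)*(pi/2)*cos (pi*x/2)" using x trig(1) by (intro mult_mono) auto
  finally have hi: "(3*pi^2/8 - 2) * sin (pi*x/2) < (4 - 2*x)*(pi/2)*cos (pi*x/2)" .
  have "(4 - 2*x)*(pi/2)*cos (pi*x/2) \<le> 3*(pi/2)*(sqrt 2/2)"
    using x trig(1,2) by (intro mult_mono) auto
  also have "\<dots> < (3*pi^2/4 - 2) * (sqrt 2/2)"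
    using pi_sq_bounds pi_approx by (intro mult_strict_right_mono) auto
  also have "\<dots> \<le> (3*pi^2/4 - 2) * sin (pi*x/2)"
    using pi_sq_bounds trig(3) by (intro mult_left_mono) auto
  finally have lo: "(4 - 2*x)*(pi/2)*cos (pi*x/2) < (3*pi^2/4 - 2) * sin (pi*x/2)" .
  have "(pi/2)^2 * sin (pi*x/2) > 0" using trig(6) by simp
  then show "-3 < minus_shift_rate x" "minus_shift_rate x < -3/2" using hi lo
    by (simp_all add: minus_shift_rate_def less_divide_eq divide_less_eq power2_eq_square
        algebra_simps)
qed

lemma P_minus_compare_level_gap:
  assumes x: "x \<in> {1/2..13/20}" and a: "0 \<le> a" "\<bar>a * e\<bar> \<le> 1/4"
  shows "P_minus a x < 4 - x + a*e \<longleftrightarrow> level_gap (1/2) e (4 - x) x a > 0"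
    and "4 - x + a*e < P_minus a x \<longleftrightarrow> level_gap (1/2) e (4 - x) x a < 0"
proof -
  have P: "P_minus a x \<in> {2..4}" "ode_level (1/2) a (P_minus a x) = ode_level (1/2) a x"
    using P_minus_return[of x a] x a by auto
  have t: "4 - x + a*e \<in> {2..4}" using x a by (auto simp: abs_le_iff)
  show "P_minus a x < 4 - x + a*e \<longleftrightarrow> level_gap (1/2) e (4 - x) x a > 0"
    using strict_mono_on_less[OF ode_level_minus_mono[of a] P(1) t] P(2)
    by (simp add: level_gap_def)
  show "4 - x + a*e < P_minus a x \<longleftrightarrow> level_gap (1/2) e (4 - x) x a < 0"
    using strict_mono_on_less[OF ode_level_minus_mono[of a] t P(1)] P(2)
    by (simp add: level_gap_def)
qed

lemma continuous_on_level_gap_deriv_minus: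
  "continuous_on ({0..1} \<times> S) (\<lambda>(a, x). level_gap_deriv (1/2) e (4 - x) x a)"
  by (simp add: case_prod_beta) (intro continuous_intros)

lemma eventually_P_minus_less:
  assumes "compact S" "S \<subseteq> {1/2..13/20}" "\<And>x. x \<in> S \<Longrightarrow> minus_shift_rate x < e"
  shows "\<forall>\<^sub>F a in at_right 0. \<forall>x\<in>S. P_minus a x < 4 - x + a*e"
proof -
  have "\<forall>\<^sub>F a in at_right 0. \<forall>x\<in>S. level_gap (1/2) e (4 - x) x a > 0"
  proof (rule eventually_uniformly_pos_by_derivative[OF assms(1)
    continuous_on_level_gap_deriv_minus])
    fix x assume "x \<in> S"
    then have "sin (pi*x/2) > 0" "minus_shift_rate x < e"
      using assms trig_bounds_in_range(6)[of x] by auto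
    then show "level_gap_deriv (1/2) e (4 - x) x 0 > 0"
      by (simp add: level_gap_deriv_minus_0)
  qed (use level_gap_has_real_derivative level_gap_minus_0 in auto)
  moreover have "\<forall>\<^sub>F a in at_right 0. \<bar>a * e\<bar> < 1/4" by (rule eventually_abs_mult_less) simp
  ultimately show ?thesis using eventually_at_right_less
    by eventually_elim (use assms P_minus_compare_level_gap(1) in force)
qed

lemma eventually_P_minus_greater:
  assumes "compact S" "S \<subseteq> {1/2..13/20}" "\<And>x. x \<in> S \<Longrightarrow> e < minus_shift_rate x"
  shows "\<forall>\<^sub>F a in at_right 0. \<forall>x\<in>S. 4 - x + a*e < P_minus a x"
proof -
  have "\<forall>\<^sub>F a in at_right 0. \<forall>x\<in>S. level_gap (1/2) e (4 - x) x a < 0"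
  proof (rule eventually_uniformly_neg_by_derivative[OF assms(1)
    continuous_on_level_gap_deriv_minus])
    fix x assume "x \<in> S"
    then have "sin (pi*x/2) > 0" "e < minus_shift_rate x"
      using assms trig_bounds_in_range(6)[of x] by auto
    then show "level_gap_deriv (1/2) e (4 - x) x 0 < 0"
      by (simp add: level_gap_deriv_minus_0 mult_pos_neg)
  qed (use level_gap_has_real_derivative level_gap_minus_0 in auto)
  moreover have "\<forall>\<^sub>F a in at_right 0. \<bar>a * e\<bar> < 1/4" by (rule eventually_abs_mult_less) simp
  ultimately show ?thesis using eventually_at_right_less
    by eventually_elim (use assms P_minus_compare_level_gap(2) in force)
qed

lemma eventually_P_minus_bounds:
  "\<forall>\<^sub>F a in at_right 0. \<forall>x\<in>{1/2..13/20}. 4 - x - 3*a < P_minus a x \<and> P_minus a x < 4 - x - 3/2*a"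
proof -
  have "\<forall>\<^sub>F a in at_right 0. \<forall>x\<in>{1/2..13/20}. 4 - x + a*(-3) < P_minus a x"
    by (rule eventually_P_minus_greater) (use minus_shift_rate_bounds in auto)
  moreover have "\<forall>\<^sub>F a in at_right 0. \<forall>x\<in>{1/2..13/20}. P_minus a x < 4 - x + a*(-3/2)"
    by (rule eventually_P_minus_less) (use minus_shift_rate_bounds in auto)
  ultimately show ?thesis by eventually_elim auto
qed

definition Delta_level :: "real \<Rightarrow> real \<Rightarrow> real" where
  "Delta_level x a = ode_level (3/2) a (x + 4) - ode_level (3/2) a (P_minus a x)"

lemma continuous_on_Delta_level_x:
  "0 \<le> a \<Longrightarrow> continuous_on {1/2..13/20} (\<lambda>x. Delta_level x a)"
  unfolding Delta_level_def
  by (intro continuous_intros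
      continuous_on_compose2[OF continuous_on_P_minus, of _ "\<lambda>x. (a, x)", simplified]) auto

lemma isCont_Delta_level_a:
  assumes "0 < x" "x < 2" "0 < a"
  shows "isCont (Delta_level x) a"
proof -
  have "continuous_on {0<..} (\<lambda>a. Delta_level x a)"
    unfolding Delta_level_def using assms
    by (intro continuous_intros
        continuous_on_compose2[OF continuous_on_P_minus, of _ "\<lambda>a. (a, x)", simplified]) auto
  then show ?thesis using assms continuous_on_eq_continuous_at[of "{0<..}" "Delta_level x"] by auto
qed

lemma continuous_on_level_gap_deriv_plus:
  "continuous_on ({0..1} \<times> S) (\<lambda>(a, x). level_gap_deriv (3/2) e (4 - x) (x + 4) a)"
  by (simp add: case_prod_beta) (intro continuous_intros)

lemma eventually_level_gap_plus_neg:
  assumes "x \<in> {1/2..13/20}" "e < plus_shift_rate x"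
  shows "\<forall>\<^sub>F a in at_right 0. level_gap (3/2) e (4 - x) (x + 4) a < 0"
proof -
  have "\<forall>\<^sub>F a in at_right 0. \<forall>y\<in>{x}. level_gap (3/2) e (4 - y) (y + 4) a < 0"
  proof (rule eventually_uniformly_neg_by_derivative[OF _ continuous_on_level_gap_deriv_plus])
    show "level_gap_deriv (3/2) e (4 - y) (y + 4) 0 < 0" if "y \<in> {x}" for y
      using that assms trig_bounds_in_range(5)[of x]
      by (simp add: level_gap_deriv_plus_0 mult_pos_neg)
  qed (use level_gap_has_real_derivative level_gap_plus_0 in auto)
  then show ?thesis by simp
qed

lemma eventually_level_gap_plus_pos:
  assumes "x \<in> {1/2..13/20}" "plus_shift_rate x < e"
  shows "\<forall>\<^sub>F a in at_right 0. level_gap (3/2) e (4 - x) (x + 4) a > 0"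
proof -
  have "\<forall>\<^sub>F a in at_right 0. \<forall>y\<in>{x}. level_gap (3/2) e (4 - y) (y + 4) a > 0"
  proof (rule eventually_uniformly_pos_by_derivative[OF _ continuous_on_level_gap_deriv_plus])
    show "level_gap_deriv (3/2) e (4 - y) (y + 4) 0 > 0" if "y \<in> {x}" for y
      using that assms trig_bounds_in_range(5)[of x] by (simp add: level_gap_deriv_plus_0)
  qed (use level_gap_has_real_derivative level_gap_plus_0 in auto)
  then show ?thesis by simp
qed

lemma in_plus_mono_range:
  assumes "x \<in> {1/2..13/20}" "0 < a" "a < 1/200" "\<bar>a * e\<bar> < 1/100"
    and "4 - x - 3*a < P_minus a x" "P_minus a x < 4 - x - 3/2*a"
  shows "P_minus a x \<in> {10/3..4}" "4 - x + a*e \<in> {10/3..4}"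
  using assms by (auto simp: abs_less_iff)

lemma eventually_Delta_level_pos:
  assumes x: "x \<in> {1/2..13/20}" and "Delta_rate x > 0"
  shows "\<forall>\<^sub>F a in at_right 0. Delta_level x a > 0"
proof -
  define e where "e = (minus_shift_rate x + plus_shift_rate x) / 2"
  have "plus_shift_rate x - minus_shift_rate x = 2/pi * Delta_rate x"
    using plus_minus_shift_rate_diff trig_bounds_in_range(5,6)[OF x] by blast
  moreover have "2/pi * Delta_rate x > 0" using assms by simp
  ultimately have "minus_shift_rate x < e" "e < plus_shift_rate x" by (auto simp: e_def)
  then have "\<forall>\<^sub>F a in at_right 0. P_minus a x < 4 - x + a*e"
      and "\<forall>\<^sub>F a in at_right 0. level_gap (3/2) e (4 - x) (x + 4) a < 0"
    using eventually_P_minus_less[of "{x}" e] eventually_level_gap_plus_neg[OF x] x by auto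
  moreover have "\<forall>\<^sub>F a in at_right 0. \<bar>a * e\<bar> < 1/100" by (rule eventually_abs_mult_less) simp
  moreover have "\<forall>\<^sub>F a in at_right 0. a \<in> {0<..<1/200::real}"
    by (rule eventually_at_right_real) simp
  ultimately show ?thesis using eventually_P_minus_bounds
  proof eventually_elim
    case (elim a)
    then have "ode_level (3/2) a (P_minus a x) < ode_level (3/2) a (4 - x + a*e)"
      using in_plus_mono_range[OF x, of a e] x
      by (intro strict_mono_onD[OF ode_level_plus_mono]) auto
    then show ?case using elim(2) by (simp add: Delta_level_def level_gap_def)
  qed
qed

lemma eventually_Delta_level_neg:
  assumes x: "x \<in> {1/2..13/20}" and "Delta_rate x < 0"
  shows "\<forall>\<^sub>F a in at_right 0. Delta_level x a < 0"
proof -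
  define e where "e = (minus_shift_rate x + plus_shift_rate x) / 2"
  have "plus_shift_rate x - minus_shift_rate x = 2/pi * Delta_rate x"
    using plus_minus_shift_rate_diff trig_bounds_in_range(5,6)[OF x] by blast
  moreover have "2/pi * Delta_rate x < 0" using assms by (simp add: divide_neg_pos)
  ultimately have "e < minus_shift_rate x" "plus_shift_rate x < e" by (auto simp: e_def)
  then have "\<forall>\<^sub>F a in at_right 0. 4 - x + a*e < P_minus a x"
      and "\<forall>\<^sub>F a in at_right 0. level_gap (3/2) e (4 - x) (x + 4) a > 0"
    using eventually_P_minus_greater[of "{x}" e] eventually_level_gap_plus_pos[OF x] x by auto
  moreover have "\<forall>\<^sub>F a in at_right 0. \<bar>a * e\<bar> < 1/100" by (rule eventually_abs_mult_less) simp
  moreover have "\<forall>\<^sub>F a in at_right 0. a \<in> {0<..<1/200::real}"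
    by (rule eventually_at_right_real) simp
  ultimately show ?thesis using eventually_P_minus_bounds
  proof eventually_elim
    case (elim a)
    then have "ode_level (3/2) a (4 - x + a*e) < ode_level (3/2) a (P_minus a x)"
      using in_plus_mono_range[OF x, of a e] x
      by (intro strict_mono_onD[OF ode_level_plus_mono]) auto
    then show ?case using elim(2) by (simp add: Delta_level_def level_gap_def)
  qed
qed

section \<open>At most one root\<close>

lemma ode_level_minus_reflection_gap_antimono:
  assumes a: "0 < a" "a \<le> 1/100" and d: "-3*a \<le> d" "d \<le> 0"
  shows "strict_antimono_on {1/2..13/20} (\<lambda>x. ode_level (1/2) a (4 - x + d) - ode_level (1/2) a x)"
proof (rule monotone_onI)
  fix x1 x2 :: real assume x12: "x1 \<in> {1/2..13/20}" "x2 \<in> {1/2..13/20}" "x1 < x2"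
  define c where "c = a^2 + (pi*(1/2))^2"
  have "c > 0" by (simp add: c_def add_nonneg_pos)
  show "ode_level (1/2) a (4 - x2 + d) - ode_level (1/2) a x2
    < ode_level (1/2) a (4 - x1 + d) - ode_level (1/2) a x1"
  proof (rule DERIV_neg_imp_decreasing[OF \<open>x1 < x2\<close>])
    fix x assume "x1 \<le> x" "x \<le> x2"
    then have x: "1/2 \<le> x" "x \<le> 13/20" using x12 by auto
    define E where
      "E = exp (a*x) * sin (pi*(1/2)*x) - exp (a*(4 - (x - d))) * sin (pi*(1/2)*(x - d))"
    have "((\<lambda>x. ode_level (1/2) a (4 - x + d) - ode_level (1/2) a x) has_real_derivative
        - c * exp (a*(4 - x + d)) * sin (pi*(1/2)*(4 - x + d)) * (-1)
          - (- c * exp (a*x) * sin (pi*(1/2)*x))) (at x)"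
      unfolding c_def
      by (intro DERIV_diff DERIV_chain2[OF ode_level_has_real_derivative]
          ode_level_has_real_derivative) (auto intro!: derivative_eq_intros)
    moreover have "- c * exp (a*(4 - x + d)) * sin (pi*(1/2)*(4 - x + d)) * (-1)
        - (- c * exp (a*x) * sin (pi*(1/2)*x)) = c * E"
    proof -
      have r: "4 - x + d = 4 - (x - d)" by simp
      show ?thesis
        unfolding E_def r sin_reflect_4[OF twice_omega_Ints(1)] by (simp add: algebra_simps)
    qed
    moreover have "E < 0"
    proof -
      have "0 < sin (pi*(1/2)*x)" using x by (intro sin_gt_zero) auto
      moreover have "sin (pi*(1/2)*x) \<le> sin (pi*(1/2)*(x - d))"
      proof (rule sin_monotone_2pi_le)
        have "x \<le> x - d" "x - d \<le> 1" using x a d by auto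
        then show "pi*(1/2)*x \<le> pi*(1/2)*(x - d)" "pi*(1/2)*(x - d) \<le> pi/2"
          using mult_left_mono[of x "x - d" "pi*(1/2)"] mult_left_mono[of "x - d" 1 "pi*(1/2)"]
          by simp_all
        have "0 \<le> pi*(1/2)*x" using x by simp
        then show "- (pi/2) \<le> pi*(1/2)*x" using pi_gt_zero by linarith
      qed
      moreover have "exp (a*x) < exp (a*(4 - (x - d)))" using x a d by simp
      ultimately have "exp (a*x) * sin (pi*(1/2)*x) < exp (a*(4 - (x - d))) * sin (pi*(1/2)*x)"
          "exp (a*(4 - (x - d))) * sin (pi*(1/2)*x)
            \<le> exp (a*(4 - (x - d))) * sin (pi*(1/2)*(x - d))"
        by (simp_all add: mult_strict_right_mono)
      then show ?thesis unfolding E_def by linarith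
    qed
    ultimately show "\<exists>y. ((\<lambda>x. ode_level (1/2) a (4 - x + d) - ode_level (1/2) a x)
      has_real_derivative y) (at x) \<and> y < 0"
      using \<open>c > 0\<close> mult_pos_neg by fastforce
  qed
qed

lemma ode_level_plus_angles:
  assumes x: "x \<in> {1/2..13/20}" and d: "0 \<le> -d" "-d \<le> 3/200"
  shows "cos (pi*(3/2)*x) \<le> -1/2" "cos (pi*(3/2)*(x - d)) \<le> -1/2"
    "0 \<le> sin (pi*(3/2)*x)" "0 \<le> sin (pi*(3/2)*(x - d))"
    "pi*(3/2)*(x - d) - pi*(3/2)*x = 3/2 * (pi * -d)"
proof -
  have "pi * (3/4) \<le> pi * (3/2*x)" "pi * (3/2*x) \<le> pi * (3/2*(x - d))" "pi * (3/2*(x - d)) \<le> pi * 1"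
    using x d by (intro mult_left_mono; simp)+
  then have b: "2*pi/3 \<le> pi*(3/2)*x" "pi*(3/2)*x \<le> pi*(3/2)*(x - d)" "pi*(3/2)*(x - d) \<le> pi"
    by (simp_all add: algebra_simps)
  have "cos (2*pi/3) = -1/2" using cos_pi_minus[of "pi/3"] cos_60 by (simp add: diff_divide_eq_iff)
  then show "cos (pi*(3/2)*x) \<le> -1/2" "cos (pi*(3/2)*(x - d)) \<le> -1/2"
    using cos_monotone_0_pi_le[of "2*pi/3" "pi*(3/2)*x"]
      cos_monotone_0_pi_le[of "2*pi/3" "pi*(3/2)*(x - d)"]
      b pi_gt_zero by linarith+
  show "0 \<le> sin (pi*(3/2)*x)" "0 \<le> sin (pi*(3/2)*(x - d))"
    using b pi_gt_zero by (intro sin_ge_zero; linarith)+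
  show "pi*(3/2)*(x - d) - pi*(3/2)*x = 3/2 * (pi * -d)" by (simp add: field_simps)
qed

lemma ode_level_plus_negative:
  assumes x: "x \<in> {1/2..13/20}" and a: "0 \<le> a" "a \<le> 1" and d: "0 \<le> -d" "-d \<le> 3/200"
  shows "ode_level (3/2) a (x + 4) < 0" "ode_level (3/2) a (4 - x + d) < 0"
proof -
  note ang = ode_level_plus_angles[OF x d]
  have "pi*(3/2)*cos (pi*(3/2)*x) \<le> pi*(3/2)*(-1/2)"
    "pi*(3/2)*cos (pi*(3/2)*(x - d)) \<le> pi*(3/2)*(-1/2)"
    using ang(1,2) by (intro mult_left_mono; simp)+
  moreover have "0 \<le> a * sin (pi*(3/2)*x)" "a * sin (pi*(3/2)*(x - d)) \<le> 1"
    using ang(3,4) a by (simp_all add: mult_le_one)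
  ultimately have "pi*(3/2)*cos (pi*(3/2)*x) - a * sin (pi*(3/2)*x) < 0"
      "pi*(3/2)*cos (pi*(3/2)*(x - d)) + a * sin (pi*(3/2)*(x - d)) < 0"
    using pi_gt3 by linarith+
  moreover have r: "4 - x + d = 4 - (x - d)" by simp
  ultimately show "ode_level (3/2) a (x + 4) < 0" "ode_level (3/2) a (4 - x + d) < 0"
    unfolding r ode_level_shift_4[OF twice_omega_Ints(2)] ode_level_reflect_4[OF twice_omega_Ints(2)]
    by (simp_all add: mult_pos_neg)
qed

lemma ln_ratio_derivative_numerator_pos:
  fixes a be om :: real
  assumes a: "0 < a" "a \<le> 1/200" and "9*pi*a/4 \<le> om - be" "om - be \<le> 1"
    and sin: "0 \<le> sin be" "0 \<le> sin om"
  shows "sin be * - (pi*(3/2)*cos om + a * sin om) - sin om * - (pi*(3/2)*cos be - a * sin be) > 0"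
proof -
  have "0 \<le> 9*pi*a/4" using a by simp
  then have "(om - be)/2 \<le> sin (om - be)"
    using assms(3,4) by (intro sin_ge_half_self) linarith+
  then have "pi*(3/2) * (9*pi*a/8) \<le> pi*(3/2) * sin (om - be)"
    using assms(3) by (intro mult_left_mono) auto
  moreover have "pi*(3/2) * (9*pi*a/8) = 27/16 * (pi^2 * a)" by (simp add: power2_eq_square)
  moreover have "98696/10000 * a \<le> pi^2 * a" using pi_sq_bounds a by (intro mult_right_mono) auto
  moreover have "2 * a * sin be * sin om \<le> 2 * a"
    using a sin by (simp add: mult_le_one mult_left_le)
  moreover have "sin be * - (pi*(3/2)*cos om + a * sin om) - sin om * - (pi*(3/2)*cos be - a * sin be)
      = pi*(3/2) * sin (om - be) - 2 * a * sin be * sin om"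
    by (simp add: sin_diff algebra_simps)
  ultimately show ?thesis using a by linarith
qed

lemma ln_ode_level_plus_ratio_mono:
  assumes a: "0 < a" "a \<le> 1/200" and d: "-3*a \<le> d" "d \<le> -3/2*a"
  shows "strict_mono_on {1/2..13/20}
    (\<lambda>x. ln (- ode_level (3/2) a (x + 4)) - ln (- ode_level (3/2) a (4 - x + d)))"
proof (rule strict_mono_onI)
  fix x1 x2 :: real assume x12: "x1 \<in> {1/2..13/20}" "x2 \<in> {1/2..13/20}" "x1 < x2"
  define c where "c = a^2 + (pi*(3/2))^2"
  have "c > 0" by (simp add: c_def add_nonneg_pos)
  show "ln (- ode_level (3/2) a (x1 + 4)) - ln (- ode_level (3/2) a (4 - x1 + d))
      < ln (- ode_level (3/2) a (x2 + 4)) - ln (- ode_level (3/2) a (4 - x2 + d))"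
  proof (rule DERIV_pos_imp_increasing[OF \<open>x1 < x2\<close>])
    fix x assume "x1 \<le> x" "x \<le> x2"
    then have x: "x \<in> {1/2..13/20}" using x12 by auto
    have d': "0 \<le> -d" "-d \<le> 3/200" using a d by auto
    define be where "be = pi*(3/2)*x"
    define om where "om = pi*(3/2)*(x - d)"
    define p where "p = - (pi*(3/2)*cos be - a * sin be)"
    define q where "q = - (pi*(3/2)*cos om + a * sin om)"
    note ang = ode_level_plus_angles[OF x d', folded be_def om_def]
    have r: "4 - x + d = 4 - (x - d)" by simp
    have A: "- ode_level (3/2) a (x + 4) = exp (a*(x + 4)) * p"
      unfolding ode_level_shift_4[OF twice_omega_Ints(2)] p_def be_def by (simp add: algebra_simps)
    have B: "- ode_level (3/2) a (4 - x + d) = exp (a*(4 - x + d)) * q"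
      unfolding r ode_level_reflect_4[OF twice_omega_Ints(2)] q_def om_def
      by (simp add: algebra_simps)
    have A0: "- ode_level (3/2) a (x + 4) > 0" and B0: "- ode_level (3/2) a (4 - x + d) > 0"
      using ode_level_plus_negative[OF x _ _ d'] a by auto
    then have "p > 0" "q > 0" unfolding A B by (simp_all add: zero_less_mult_iff)
    have sA: "sin (pi*(3/2)*(x + 4)) = sin be"
      unfolding be_def by (rule sin_shift_4[OF twice_omega_Ints(2)])
    have sB: "sin (pi*(3/2)*(4 - x + d)) = - sin om"
      unfolding r om_def by (rule sin_reflect_4[OF twice_omega_Ints(2)])
    have "((\<lambda>x. - ode_level (3/2) a (x + 4)) has_real_derivative
        - (- c * exp (a*(x + 4)) * sin (pi*(3/2)*(x + 4)) * 1)) (at x)"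
      unfolding c_def by (intro DERIV_minus DERIV_chain2[OF ode_level_has_real_derivative])
        (auto intro!: derivative_eq_intros)
    from DERIV_chain2[OF DERIV_ln[OF A0] this[unfolded sA], unfolded A] have dA:
      "((\<lambda>x. ln (- ode_level (3/2) a (x + 4))) has_real_derivative c * sin be / p) (at x)"
      using \<open>p > 0\<close> by (simp add: field_simps)
    have "((\<lambda>x. - ode_level (3/2) a (4 - x + d)) has_real_derivative
        - (- c * exp (a*(4 - x + d)) * sin (pi*(3/2)*(4 - x + d)) * (-1))) (at x)"
      unfolding c_def by (intro DERIV_minus DERIV_chain2[OF ode_level_has_real_derivative])
        (auto intro!: derivative_eq_intros)
    from DERIV_chain2[OF DERIV_ln[OF B0] this[unfolded sB], unfolded B] have dB:
      "((\<lambda>x. ln (- ode_level (3/2) a (4 - x + d))) has_real_derivative c * sin om / q) (at x)"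
      using \<open>q > 0\<close> by (simp add: field_simps)
    have "pi * (3/2*a) \<le> pi * -d" "pi * -d \<le> pi * (3/200)"
      using a d by (intro mult_left_mono; simp)+
    then have "9*pi*a/4 \<le> om - be" "om - be \<le> 1" using ang(5) pi_less_4 by linarith+
    then have "sin be * q - sin om * p > 0"
      unfolding p_def q_def using ln_ratio_derivative_numerator_pos a ang(3,4) by blast
    then have "c * sin be / p - c * sin om / q > 0"
      using \<open>p > 0\<close> \<open>q > 0\<close> \<open>c > 0\<close> by (simp add: field_simps)
    then show "\<exists>y. ((\<lambda>x. ln (- ode_level (3/2) a (x + 4)) - ln (- ode_level (3/2) a (4 - x + d)))
        has_real_derivative y) (at x) \<and> 0 < y"
      using DERIV_diff[OF dA dB] by blast
  qed
qed

text \<open>Write \<open>P_minus a x = 4 - x + d\<close>. Between two zeros \<open>x1 < x2\<close>, the return relation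
  of \<open>P_minus\<close> forces \<open>d\<close> to increase, while \<open>Delta_level = 0\<close> forces it to decrease.\<close>

lemma Delta_level_zero_unique:
  assumes a: "0 < a" "a \<le> 1/200"
    and bounds: "\<And>x. x \<in> {1/2..13/20} \<Longrightarrow> 4 - x - 3*a < P_minus a x \<and> P_minus a x < 4 - x - 3/2*a"
    and x: "x1 \<in> {1/2..13/20}" "x2 \<in> {1/2..13/20}"
    and zero: "Delta_level x1 a = 0" "Delta_level x2 a = 0"
  shows "x1 = x2"
proof -
  have False if y: "y1 \<in> {1/2..13/20}" "y2 \<in> {1/2..13/20}" "y1 < y2"
    and zero: "Delta_level y1 a = 0" "Delta_level y2 a = 0" for y1 y2
  proof -
    define d1 where "d1 = P_minus a y1 - 4 + y1"
    define d2 where "d2 = P_minus a y2 - 4 + y2"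
    have P: "P_minus a y1 = 4 - y1 + d1" "P_minus a y2 = 4 - y2 + d2"
      by (simp_all add: d1_def d2_def)
    have d: "-3*a < d1" "d1 < -3/2*a" "-3*a < d2" "d2 < -3/2*a"
      using bounds[OF y(1)] bounds[OF y(2)] by (auto simp: d1_def d2_def)
    have minus1: "ode_level (1/2) a (4 - y1 + d1) = ode_level (1/2) a y1"
      and minus2: "ode_level (1/2) a (4 - y2 + d2) = ode_level (1/2) a y2"
      using P_minus_return[of y1 a] P_minus_return[of y2 a] y a P by auto
    have plus1: "ode_level (3/2) a (y1 + 4) = ode_level (3/2) a (4 - y1 + d1)"
      and plus2: "ode_level (3/2) a (y2 + 4) = ode_level (3/2) a (4 - y2 + d2)"
      using zero P by (simp_all add: Delta_level_def)
    have "ode_level (1/2) a (4 - y2 + d1) - ode_level (1/2) a y2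
        < ode_level (1/2) a (4 - y1 + d1) - ode_level (1/2) a y1"
      using monotone_onD[OF ode_level_minus_reflection_gap_antimono] a d y by auto
    then have "ode_level (1/2) a (4 - y2 + d1) < ode_level (1/2) a (4 - y2 + d2)"
      using minus1 minus2 by simp
    then have "d1 < d2"
      using strict_mono_on_less[OF ode_level_minus_mono, of "4 - y2 + d1" "4 - y2 + d2"] a d y
      by auto
    have "ln (- ode_level (3/2) a (y1 + 4)) - ln (- ode_level (3/2) a (4 - y1 + d1))
        < ln (- ode_level (3/2) a (y2 + 4)) - ln (- ode_level (3/2) a (4 - y2 + d1))"
      using strict_mono_onD[OF ln_ode_level_plus_ratio_mono] a d y by auto
    moreover have "- ode_level (3/2) a (4 - y2 + d1) > 0" "- ode_level (3/2) a (y2 + 4) > 0"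
      using ode_level_plus_negative[OF y(2), of a d1] a d by auto
    ultimately have "ode_level (3/2) a (4 - y2 + d2) < ode_level (3/2) a (4 - y2 + d1)"
      using plus1 plus2 by simp
    then have "d2 < d1"
      using strict_mono_on_less[OF ode_level_plus_mono, of "4 - y2 + d2" "4 - y2 + d1"] a d y
      by auto
    with \<open>d1 < d2\<close> show False by simp
  qed
  then show ?thesis using x zero by (metis linorder_neqE_linordered_idom)
qed

section \<open>The limit equation\<close>

lemma Delta_rate_has_real_derivative:
  assumes "sin (3*pi*x/2) \<noteq> 0" "sin (pi*x/2) \<noteq> 0"
  shows "(Delta_rate has_real_derivative
    2/3 * cot (3*pi*x/2) - inverse ((sin (3*pi*x/2))^2) * (3*pi/2) * (2*x/3)
    - 2 * cot (pi*x/2) - inverse ((sin (pi*x/2))^2) * (pi/2) * (4 - 2*x)) (at x)"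
proof -
  have "((\<lambda>x. cot (3*pi*x/2)) has_real_derivative - inverse ((sin (3*pi*x/2))^2) * (3*pi/2)) (at x)"
    by (rule DERIV_chain2[where g = "\<lambda>x. 3*pi*x/2", OF DERIV_cot[OF assms(1)]])
      (auto intro!: derivative_eq_intros)
  moreover have
    "((\<lambda>x. cot (pi*x/2)) has_real_derivative - inverse ((sin (pi*x/2))^2) * (pi/2)) (at x)"
    by (rule DERIV_chain2[where g = "\<lambda>x. pi*x/2", OF DERIV_cot[OF assms(2)]])
      (auto intro!: derivative_eq_intros)
  moreover have "((\<lambda>x. 2*x/3) has_real_derivative 2/3) (at x)"
    "((\<lambda>x. 4 - 2*x) has_real_derivative -2) (at x)"
    by (auto intro!: derivative_eq_intros)
  ultimately have "(Delta_rate has_real_derivative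
      0 + (2/3 * cot (3*pi*x/2) + - inverse ((sin (3*pi*x/2))^2) * (3*pi/2) * (2*x/3))
      + (-2 * cot (pi*x/2) + - inverse ((sin (pi*x/2))^2) * (pi/2) * (4 - 2*x))) (at x)"
    unfolding Delta_rate_def[abs_def] by (intro DERIV_add DERIV_const DERIV_mult)
  then show ?thesis by (rule DERIV_cong) linarith
qed

lemma Delta_rate_antimono: "strict_antimono_on {1/2..13/20} Delta_rate"
proof (rule monotone_onI)
  fix x1 x2 :: real assume x12: "x1 \<in> {1/2..13/20}" "x2 \<in> {1/2..13/20}" "x1 < x2"
  show "Delta_rate x2 < Delta_rate x1"
  proof (rule DERIV_neg_imp_decreasing[OF \<open>x1 < x2\<close>])
    fix x assume "x1 \<le> x" "x \<le> x2"
    then have x: "x \<in> {1/2..13/20}" using x12 by auto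
    note trig = trig_bounds_in_range[OF x]
    have "cot (3*pi*x/2) < 0" "cot (pi*x/2) > 0"
      using trig by (auto simp: cot_def divide_neg_pos)
    moreover have "0 < inverse ((sin (3*pi*x/2))^2) * (3*pi/2) * (2*x/3)"
        "0 < inverse ((sin (pi*x/2))^2) * (pi/2) * (4 - 2*x)"
      using x trig by (auto intro!: mult_pos_pos)
    moreover have "(Delta_rate has_real_derivative
        2/3 * cot (3*pi*x/2) - inverse ((sin (3*pi*x/2))^2) * (3*pi/2) * (2*x/3)
        - 2 * cot (pi*x/2) - inverse ((sin (pi*x/2))^2) * (pi/2) * (4 - 2*x)) (at x)"
      by (rule Delta_rate_has_real_derivative) (use trig in auto)
    ultimately show "\<exists>y. (Delta_rate has_real_derivative y) (at x) \<and> y < 0"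
      by (intro exI conjI) (assumption, linarith)
  qed
qed

lemma Delta_rate_left_pos: "Delta_rate (1/2) > 0"
proof -
  have "3 * pi * (1/2) / 2 = pi - pi/4" "pi * (1/2) / 2 = pi/4" by simp_all
  moreover have "cot (pi/4) = 1" "cot (pi - pi/4) = -1"
    unfolding cot_def cos_pi_minus sin_pi_minus cos_45 sin_45 by simp_all
  ultimately have "Delta_rate (1/2) = 32 / (9 * pi) + 8/3" unfolding Delta_rate_def by simp
  then show ?thesis by (simp add: add_pos_pos)
qed

lemma Delta_rate_right_neg: "Delta_rate (13/20) < 0"
proof -
  have "cot (pi * (13/20) / 2) \<le> 1"
    using trig_bounds_in_range[of "13/20"] by (simp add: cot_def)
  have "cot (pi - pi/40) \<le> -10"
  proof -
    have "0 < sin (pi/40)" by (rule sin_gt_zero) auto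
    moreover have "sin (pi/40) \<le> pi/40" by (rule sin_x_le_x) simp
    moreover have "17/20 \<le> cos (pi/40)"
    proof -
      have "1.7 \<le> sqrt (3::real)" by (rule real_le_rsqrt) (simp add: power2_eq_square)
      moreover have "cos (pi/6) \<le> cos (pi/40)" by (rule cos_monotone_0_pi_le) auto
      ultimately show ?thesis using cos_30 by simp
    qed
    moreover have "pi \<le> 63/20" using pi_approx by simp
    ultimately have "10 \<le> cos (pi/40) / sin (pi/40)" by (simp add: field_simps)
    then show ?thesis unfolding cot_def cos_pi_minus sin_pi_minus by simp
  qed
  moreover have "32 / (9*pi) \<le> 32/27" using pi_gt3 by (simp add: field_simps)
  moreover have "3 * pi * (13/20) / 2 = pi - pi/40" by simp
  ultimately show ?thesis
    using \<open>cot (pi * (13/20) / 2) \<le> 1\<close> unfolding Delta_rate_def by simp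
qed

lemma Delta_rate_zero:
  obtains x0 where "x0 \<in> {1/2<..<13/20}" "Delta_rate x0 = 0"
proof -
  have "continuous_on {1/2..13/20} Delta_rate"
    using Delta_rate_has_real_derivative trig_bounds_in_range(5,6)
    by (intro continuous_at_imp_continuous_on ballI DERIV_isCont) force
  then obtain x0 where "1/2 \<le> x0" "x0 \<le> 13/20" "Delta_rate x0 = 0"
    using IVT2'[of Delta_rate "13/20" 0 "1/2"] Delta_rate_left_pos Delta_rate_right_neg by auto
  moreover have "x0 \<noteq> 1/2" "x0 \<noteq> 13/20"
    using Delta_rate_left_pos Delta_rate_right_neg \<open>Delta_rate x0 = 0\<close> by force+
  ultimately show thesis using that[of x0] by simp
qed

section \<open>The branch of roots\<close>

lemma eventually_Delta_level_root_structure: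
  "\<forall>\<^sub>F a in at_right 0. Delta_level (1/2) a > 0 \<and> Delta_level (13/20) a < 0 \<and>
    (\<forall>x\<in>{1/2..13/20}. \<forall>y\<in>{1/2..13/20}. Delta_level x a = 0 \<longrightarrow> Delta_level y a = 0 \<longrightarrow> x = y) \<and>
    (\<forall>x\<in>{1/2..13/20}. Delta x a = 0 \<longleftrightarrow> Delta_level x a = 0)"
  using eventually_Delta_level_pos[OF _ Delta_rate_left_pos, simplified]
    eventually_Delta_level_neg[OF _ Delta_rate_right_neg, simplified]
    eventually_P_minus_bounds eventually_at_right_real[of 0 "1/200::real", simplified]
proof eventually_elim
  case (elim a)
  then have a: "0 < a" "a \<le> 1/200" by auto
  have "Delta x a = 0 \<longleftrightarrow> Delta_level x a = 0" if x: "x \<in> {1/2..13/20}" for x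
  proof -
    have "10/3 < P_minus a x" "P_minus a x < 4" using elim(3) x a by force+
    then show ?thesis using Delta_eq_0_iff[of x a] x a by (simp add: Delta_level_def)
  qed
  then show ?case using elim Delta_level_zero_unique[OF a] by blast
qed

lemma Delta_zero_branch:
  obtains A x0 xf where "A > 0" "x0 \<in> {1/2<..<13/20}" "Delta_rate x0 = 0" "xf 0 = x0"
    "continuous_on {0..<A} xf" "\<And>a. a \<in> {0<..<A} \<Longrightarrow> xf a \<in> {1/2<..<13/20} \<and> Delta (xf a) a = 0"
    "\<And>a x. a \<in> {0<..<A} \<Longrightarrow> x \<in> {1/2..13/20} \<Longrightarrow> Delta x a = 0 \<Longrightarrow> x = xf a"
proof -
  obtain x0 where x0: "x0 \<in> {1/2<..<13/20}" "Delta_rate x0 = 0" by (rule Delta_rate_zero)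
  obtain A where "A > 0" and A: "\<And>a. a \<in> {0<..<A} \<Longrightarrow>
      Delta_level (1/2) a > 0 \<and> Delta_level (13/20) a < 0 \<and>
      (\<forall>x\<in>{1/2..13/20}. \<forall>y\<in>{1/2..13/20}. Delta_level x a = 0 \<longrightarrow> Delta_level y a = 0 \<longrightarrow> x = y) \<and>
      (\<forall>x\<in>{1/2..13/20}. Delta x a = 0 \<longleftrightarrow> Delta_level x a = 0)"
    using eventually_Delta_level_root_structure
    unfolding eventually_at_right_field greaterThanLessThan_iff by blast
  have before_x0: "Delta_rate x > 0" if "x \<in> {1/2..<x0}" for x
    using monotone_onD[OF Delta_rate_antimono, of x x0] that x0 by auto
  have after_x0: "Delta_rate x < 0" if "x \<in> {x0<..13/20}" for x
    using monotone_onD[OF Delta_rate_antimono, of x0 x] that x0 by auto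
  obtain xf where xf: "xf 0 = x0" "continuous_on {0..<A} xf"
      "\<And>a. a \<in> {0<..<A} \<Longrightarrow> xf a \<in> {1/2<..<13/20} \<and> Delta_level (xf a) a = 0"
  proof (rule continuous_zero_branch[of A "1/2" "13/20" Delta_level x0])
    show "continuous_on {1/2..13/20} (\<lambda>x. Delta_level x a)" if "a \<in> {0<..<A}" for a
      using continuous_on_Delta_level_x that by simp
    show "isCont (Delta_level x) a" if "x \<in> {1/2..13/20}" "a \<in> {0<..<A}" for x a
      using isCont_Delta_level_a that by simp
    show "\<forall>\<^sub>F a in at_right 0. Delta_level x a > 0" if "x \<in> {1/2..<x0}" for x
      using eventually_Delta_level_pos before_x0 that x0 by simp
    show "\<forall>\<^sub>F a in at_right 0. Delta_level x a < 0" if "x \<in> {x0<..13/20}" for x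
      using eventually_Delta_level_neg after_x0 that x0 by simp
    show "x0 \<in> {1/2..13/20}" using x0 by simp
  qed (use A that in blast)+
  show thesis
  proof (rule that[OF \<open>A > 0\<close> x0 xf(1,2)])
    show "xf a \<in> {1/2<..<13/20} \<and> Delta (xf a) a = 0" if "a \<in> {0<..<A}" for a
      using xf(3)[OF that] A[OF that] by auto
    show "x = xf a" if "a \<in> {0<..<A}" "x \<in> {1/2..13/20}" "Delta x a = 0" for a x
      using that A[OF that(1)] xf(3)[OF that(1)] by auto
  qed
qed

theorem lemma2:
  shows "\<exists>a_l > 0. \<exists>xf :: real \<Rightarrow> real. \<exists>x0 \<in> I_minus.
     32 / (9 * pi) + (2 * x0 / 3) * cot (3 * pi * x0 / 2) + (4 - 2 * x0) * cot (pi * x0 / 2) = 0 \<and>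
     xf 0 = x0 \<and> continuous_on {0..<a_l} xf \<and>
     (\<forall>a \<in> {0<..<a_l}. xf a \<in> I_minus \<and> Delta (xf a) a = 0) \<and>
     (\<exists>\<delta> > 0. \<forall>a \<in> {0<..<a_l}. \<forall>x \<in> I_minus.
         \<bar>x - x0\<bar> < \<delta> \<and> Delta x a = 0 \<longrightarrow> x = xf a)"
proof -
  obtain A x0 xf where A: "A > 0" and x0: "x0 \<in> {1/2<..<13/20}" "Delta_rate x0 = 0"
    and xf: "xf 0 = x0" "continuous_on {0..<A} xf"
      "\<And>a. a \<in> {0<..<A} \<Longrightarrow> xf a \<in> {1/2<..<13/20} \<and> Delta (xf a) a = 0"
    and unique: "\<And>a x. a \<in> {0<..<A} \<Longrightarrow> x \<in> {1/2..13/20} \<Longrightarrow> Delta x a = 0 \<Longrightarrow> x = xf a"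
    using Delta_zero_branch by blast
  define \<delta> where "\<delta> = min (x0 - 1/2) (13/20 - x0)"
  have "\<delta> > 0" using x0 by (simp add: \<delta>_def)
  moreover have "x = xf a" if "a \<in> {0<..<A}" "\<bar>x - x0\<bar> < \<delta>" "Delta x a = 0" for a x
    using that unique[of a x] by (auto simp: \<delta>_def abs_less_iff)
  moreover have "x0 \<in> I_minus" "\<And>a. a \<in> {0<..<A} \<Longrightarrow> xf a \<in> I_minus \<and> Delta (xf a) a = 0"
    using x0 xf(3) by (fastforce simp: I_minus_def)+
  moreover have
    "32 / (9 * pi) + (2 * x0 / 3) * cot (3 * pi * x0 / 2) + (4 - 2 * x0) * cot (pi * x0 / 2) = 0"
    using x0 by (simp add: Delta_rate_def)
  ultimately show ?thesis using A xf(1,2) by blast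
qed

end
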